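(* Assume the standing hypotheses (H). Then $\alpha(G)\le 4$, i.e., every part of $G$ has at most $4$ vertices.
   Context: $\alpha(G)$ is the independence number. A list assignment $L$ assigns to each vertex $v$ a set $L(v)$ of colors; an $L$-coloring is a proper coloring $f$ with $f(v)\in L(v)$ for all $v$; $\mathrm{ch}$ denotes choice number and $\chi$ chromatic number. A part of a complete multipartite graph is one of its maximal stable sets. Standing hypotheses (H): $k\ge1$ and $n\ge 2k+2$ are integers; $G$ is a complete $k$-partite graph (exactly $k$ nonempty parts) on $n$ vertices; $L$ is a list assignment for $G$ with $|L(v)|\ge\lceil (n+k-1)/3\rceil$ for every vertex $v$; $G$ has no $L$-coloring; $\left|\bigcup_{v\in V(G)}L(v)\right|\le n-1$; and every graph $H$ with fewer than $n$ vertices satisfies $\mathrm{ch}(H)\le\max\{\chi(H),\lceil(|V(H)|+\chi(H)-1)/3\rceil\}$. *)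

theory Defs
  imports Complex_Main "HOL-Library.Disjoint_Sets"
begin

definition graph :: "'a set \<Rightarrow> ('a \<Rightarrow> 'a \<Rightarrow> bool) \<Rightarrow> bool" where
  "graph V E \<longleftrightarrow> finite V \<and> (\<forall>u v. E u v \<longrightarrow> u \<in> V \<and> v \<in> V \<and> u \<noteq> v \<and> E v u)"

definition proper_coloring :: "'a set \<Rightarrow> ('a \<Rightarrow> 'a \<Rightarrow> bool) \<Rightarrow> ('a \<Rightarrow> 'c) \<Rightarrow> bool" where
  "proper_coloring V E f \<longleftrightarrow> (\<forall>u\<in>V. \<forall>v\<in>V. E u v \<longrightarrow> f u \<noteq> f v)"

definition L_coloring :: "'a set \<Rightarrow> ('a \<Rightarrow> 'a \<Rightarrow> bool) \<Rightarrow> ('a \<Rightarrow> 'c set) \<Rightarrow> ('a \<Rightarrow> 'c) \<Rightarrow> bool" where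
  "L_coloring V E L f \<longleftrightarrow> proper_coloring V E f \<and> (\<forall>v\<in>V. f v \<in> L v)"

definition colorable :: "'a set \<Rightarrow> ('a \<Rightarrow> 'a \<Rightarrow> bool) \<Rightarrow> nat \<Rightarrow> bool" where
  "colorable V E k \<longleftrightarrow> (\<exists>f :: 'a \<Rightarrow> nat. proper_coloring V E f \<and> f ` V \<subseteq> {..<k})"

definition chromatic_number :: "'a set \<Rightarrow> ('a \<Rightarrow> 'a \<Rightarrow> bool) \<Rightarrow> nat" where
  "chromatic_number V E = (LEAST k. colorable V E k)"

definition choosable :: "'a set \<Rightarrow> ('a \<Rightarrow> 'a \<Rightarrow> bool) \<Rightarrow> nat \<Rightarrow> bool" where
  "choosable V E k \<longleftrightarrow> (\<forall>L :: 'a \<Rightarrow> nat set. (\<forall>v\<in>V. finite (L v) \<and> card (L v) \<ge> k) \<longrightarrow>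
      (\<exists>f. L_coloring V E L f))"

definition choice_number :: "'a set \<Rightarrow> ('a \<Rightarrow> 'a \<Rightarrow> bool) \<Rightarrow> nat" where
  "choice_number V E = (LEAST k. choosable V E k)"

definition independent_set :: "'a set \<Rightarrow> ('a \<Rightarrow> 'a \<Rightarrow> bool) \<Rightarrow> 'a set \<Rightarrow> bool" where
  "independent_set V E S \<longleftrightarrow> S \<subseteq> V \<and> (\<forall>u\<in>S. \<forall>v\<in>S. \<not> E u v)"

definition independence_number :: "'a set \<Rightarrow> ('a \<Rightarrow> 'a \<Rightarrow> bool) \<Rightarrow> nat" where
  "independence_number V E = Max (card ` {S. independent_set V E S})"

definition complete_multipartite ::
  "'a set \<Rightarrow> ('a \<Rightarrow> 'a \<Rightarrow> bool) \<Rightarrow> 'a set set \<Rightarrow> bool" where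
  "complete_multipartite V E P \<longleftrightarrow> graph V E \<and> partition_on V P \<and>
     (\<forall>u\<in>V. \<forall>v\<in>V. E u v \<longleftrightarrow> \<not> (\<exists>X\<in>P. u \<in> X \<and> v \<in> X))"

end

theory Submission
  imports Defs
begin

text \<open>If a color \<open>c\<close> lay in the lists of three vertices of one part, deleting them would leave a
  graph on \<open>n - 3\<close> vertices with chromatic number at most \<open>k\<close>; by minimality it is
  \<open>(q - 1)\<close>-choosable, where \<open>q = \<lceil>(n + k - 1) / 3\<rceil> > k\<close>.  Coloring it from the lists with \<open>c\<close>
  removed and giving \<open>c\<close> to the three deleted (pairwise non-adjacent) vertices would color \<open>G\<close>.
  Hence every color lies in at most two lists of each part, so a part \<open>X\<close> satisfies
  \<open>|X| q \<le> 2 (n - 1)\<close>; summing over the \<open>k\<close> parts also gives \<open>n q \<le> 2 k (n - 1)\<close>, i.e. \<open>q < 2 k\<close>.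
  A part of size five would force \<open>5 q \<le> 2 n - 2 \<le> 6 q - 2 k\<close>, contradicting \<open>q < 2 k\<close>.\<close>

lemma L_coloring_greedy:
  fixes L :: "'a \<Rightarrow> 'c set"
  assumes "finite W" and irrefl: "\<forall>v. \<not> E v v"
    and "\<forall>v\<in>W. finite (L v) \<and> card (L v) \<ge> card W"
  shows "\<exists>f. L_coloring W E L f"
  using assms(1,3)
proof (induction W rule: finite_induct)
  case empty
  then show ?case by (auto simp: L_coloring_def proper_coloring_def)
next
  case (insert x F)
  then obtain f where f: "L_coloring F E L f" by fastforce
  have "card (f ` F) < card (L x)"
    using insert card_image_le[of F f] by fastforce
  then obtain c where c: "c \<in> L x" "c \<notin> f ` F"
    by (metis card_mono finite_imageI insert.hyps(1) not_le subsetI)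
  have "L_coloring (insert x F) E L (f(x := c))"
    using f c insert.hyps(2) irrefl
    unfolding L_coloring_def proper_coloring_def by (auto simp: image_iff)
  then show ?case by blast
qed

lemma choosable_mono: "choosable V E a \<Longrightarrow> a \<le> b \<Longrightarrow> choosable V E b"
  unfolding choosable_def by (meson le_trans)

lemma choosable_choice_number:
  assumes "graph V E"
  shows "choosable V E (choice_number V E)"
proof -
  have "finite V" and "\<forall>v. \<not> E v v" using assms unfolding graph_def by auto
  then have "choosable V E (card V)"
    unfolding choosable_def using L_coloring_greedy by blast
  then show ?thesis unfolding choice_number_def by (rule LeastI)
qed

text \<open>Choosability is defined with natural-number colors only; an injection of the finitely many
  colors in use into \<open>\<nat>\<close> transfers it to lists over any color type.\<close>
lemma choosable_imp_L_coloring: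
  fixes L :: "'a \<Rightarrow> 'c set"
  assumes "finite V" and "choosable V E m"
    and lists: "\<forall>v\<in>V. finite (L v) \<and> card (L v) \<ge> m"
  shows "\<exists>f. L_coloring V E L f"
proof -
  define C where "C = (\<Union>v\<in>V. L v)"
  have "finite C" using assms(1) lists unfolding C_def by auto
  then obtain g :: "'c \<Rightarrow> nat" where g: "inj_on g C"
    using finite_imp_inj_to_nat_seg by blast
  have LC: "L v \<subseteq> C" if "v \<in> V" for v using that unfolding C_def by blast
  then have "\<forall>v\<in>V. finite (g ` L v) \<and> card (g ` L v) \<ge> m"
    using lists inj_on_subset[OF g] by (simp add: card_image)
  then obtain f where f: "L_coloring V E (\<lambda>v. g ` L v) f"
    using assms(2)[unfolded choosable_def, rule_format, of "\<lambda>v. g ` L v"] by blast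
  then have f_img: "f v \<in> g ` L v" if "v \<in> V" for v
    using that unfolding L_coloring_def by blast
  have g_inv: "inv_into C g (f v) \<in> L v" if "v \<in> V" for v
    using f_img[OF that] LC[OF that] g by (auto simp: inv_into_f_f)
  have "inj_on (inv_into C g) (g ` C)" by (rule inj_on_inv_into) simp
  then have "inv_into C g (f u) \<noteq> inv_into C g (f w)" if "u \<in> V" "w \<in> V" "f u \<noteq> f w" for u w
    using that f_img LC unfolding inj_on_def by (meson image_mono subsetD)
  then have "L_coloring V E L (inv_into C g \<circ> f)"
    using f g_inv unfolding L_coloring_def proper_coloring_def by auto
  then show ?thesis by blast
qed

definition induced_edges :: "'a set \<Rightarrow> ('a \<Rightarrow> 'a \<Rightarrow> bool) \<Rightarrow> 'a \<Rightarrow> 'a \<Rightarrow> bool" where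
  "induced_edges W E u v \<longleftrightarrow> E u v \<and> u \<in> W \<and> v \<in> W"

lemma graph_induced_edges: "graph V E \<Longrightarrow> W \<subseteq> V \<Longrightarrow> graph W (induced_edges W E)"
  unfolding graph_def induced_edges_def by (auto intro: finite_subset)

lemma L_coloring_induced_edges_iff:
  "L_coloring W (induced_edges W E) L f \<longleftrightarrow> L_coloring W E L f"
  unfolding L_coloring_def proper_coloring_def induced_edges_def by auto

lemma L_coloring_extend_by_color_class:
  assumes f: "L_coloring (V - T) E (\<lambda>v. L v - {c}) f"
    and indep: "\<forall>u\<in>T. \<forall>w\<in>T. \<not> E u w"
    and c: "\<forall>v\<in>T. c \<in> L v"
  shows "L_coloring V E L (\<lambda>v. if v \<in> T then c else f v)"
  using assms unfolding L_coloring_def proper_coloring_def by (auto 4 3)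

lemma L_coloring_of_choosable_remainder:
  fixes L :: "'a \<Rightarrow> 'c set"
  assumes "finite V"
    and indep: "\<forall>u\<in>T. \<forall>w\<in>T. \<not> E u w" and c: "\<forall>v\<in>T. c \<in> L v"
    and ch: "choosable (V - T) (induced_edges (V - T) E) m"
    and lists: "\<forall>v\<in>V. finite (L v) \<and> card (L v) \<ge> Suc m"
  shows "\<exists>f. L_coloring V E L f"
proof -
  have "finite (V - T)" using \<open>finite V\<close> by simp
  moreover have "\<forall>v\<in>V - T. finite (L v - {c}) \<and> card (L v - {c}) \<ge> m"
  proof
    fix v assume "v \<in> V - T"
    then have "finite (L v)" "Suc m \<le> card (L v)" using lists by auto
    moreover have "card (L v) - 1 \<le> card (L v - {c})"
      using diff_card_le_card_Diff[of "{c}" "L v"] by simp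
    ultimately show "finite (L v - {c}) \<and> card (L v - {c}) \<ge> m" by simp
  qed
  ultimately obtain f where "L_coloring (V - T) (induced_edges (V - T) E) (\<lambda>v. L v - {c}) f"
    using choosable_imp_L_coloring[OF _ ch, where L = "\<lambda>v. L v - {c}"] by blast
  then have "L_coloring (V - T) E (\<lambda>v. L v - {c}) f"
    by (simp only: L_coloring_induced_edges_iff)
  then show ?thesis using L_coloring_extend_by_color_class[OF _ indep c] by blast
qed

lemma colorable_by_parts:
  assumes "V \<subseteq> \<Union>P" and "finite P"
    and edges: "\<forall>u\<in>V. \<forall>w\<in>V. E u w \<longrightarrow> \<not> (\<exists>X\<in>P. u \<in> X \<and> w \<in> X)"
  shows "colorable V E (card P)"
proof -
  obtain h where h: "bij_betw h P {..<card P}"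
    using ex_bij_betw_finite_nat[OF assms(2)] atLeast0LessThan by auto
  define part where "part u = (SOME X. X \<in> P \<and> u \<in> X)" for u
  have part: "part u \<in> P \<and> u \<in> part u" if "u \<in> V" for u
    unfolding part_def using assms(1) that by (metis (mono_tags, lifting) UnionE someI subsetD)
  have "proper_coloring V E (h \<circ> part)"
    unfolding proper_coloring_def
    using edges part h unfolding bij_betw_def inj_on_def by (metis comp_apply)
  moreover have "(h \<circ> part) ` V \<subseteq> {..<card P}"
    using part bij_betw_apply[OF h] by auto
  ultimately show ?thesis unfolding colorable_def by blast
qed

lemma chromatic_number_induced_le_card_parts:
  assumes G: "complete_multipartite V E P" and "W \<subseteq> V"
  shows "chromatic_number W (induced_edges W E) \<le> card P"
proof -
  have "finite V" and part: "partition_on V P"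
    and adj: "\<forall>u\<in>V. \<forall>v\<in>V. E u v \<longleftrightarrow> \<not> (\<exists>X\<in>P. u \<in> X \<and> v \<in> X)"
    using G unfolding complete_multipartite_def graph_def by blast+
  have "colorable W (induced_edges W E) (card P)"
  proof (rule colorable_by_parts)
    show "W \<subseteq> \<Union>P" using \<open>W \<subseteq> V\<close> partition_onD1[OF part] by blast
    show "finite P" using finite_elements[OF \<open>finite V\<close> part] .
    show "\<forall>u\<in>W. \<forall>w\<in>W. induced_edges W E u w \<longrightarrow> \<not> (\<exists>X\<in>P. u \<in> X \<and> w \<in> X)"
      using adj \<open>W \<subseteq> V\<close> unfolding induced_edges_def by blast
  qed
  then show ?thesis unfolding chromatic_number_def by (rule Least_le)
qed

lemma choosable_of_choice_number_bound:
  assumes bound: "choice_number W F \<le> max (chromatic_number W F)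
      (nat \<lceil>(real (card W) + real (chromatic_number W F) - 1) / 3\<rceil>)"
    and "graph W F" and "chromatic_number W F \<le> m" and "card W + chromatic_number W F \<le> 3 * m + 1"
  shows "choosable W F m"
proof -
  have "real (card W + chromatic_number W F) \<le> real (3 * m + 1)"
    using assms(4) by (rule of_nat_mono)
  then have "nat \<lceil>(real (card W) + real (chromatic_number W F) - 1) / 3\<rceil> \<le> m"
    by simp
  then have "choice_number W F \<le> m" using bound assms(3) by linarith
  then show ?thesis using choosable_mono[OF choosable_choice_number[OF \<open>graph W F\<close>]] by blast
qed

lemma choosable_after_removing_three:
  fixes V :: "'a set"
  assumes G: "complete_multipartite V E P" and T: "T \<subseteq> V" "card T = 3"
    and minimal: "\<forall>(V' :: 'a set) E'. graph V' E' \<and> card V' < card V \<longrightarrow>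
        choice_number V' E' \<le> max (chromatic_number V' E')
          (nat \<lceil>(real (card V') + real (chromatic_number V' E') - 1) / 3\<rceil>)"
    and "card P \<le> m" and "card V + card P \<le> 3 * m + 4"
  shows "choosable (V - T) (induced_edges (V - T) E) m"
proof -
  let ?W = "V - T" and ?F = "induced_edges (V - T) E"
  have "graph V E" using G unfolding complete_multipartite_def by blast
  then have "graph ?W ?F" using graph_induced_edges by blast
  have "finite V" using \<open>graph V E\<close> unfolding graph_def by blast
  then have "card ?W + 3 = card V"
    using T card_mono[OF \<open>finite V\<close> T(1)] by (simp add: card_Diff_subset finite_subset)
  moreover have "chromatic_number ?W ?F \<le> card P"
    using chromatic_number_induced_le_card_parts[OF G Diff_subset] .
  moreover have "choice_number ?W ?F \<le> max (chromatic_number ?W ?F)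
      (nat \<lceil>(real (card ?W) + real (chromatic_number ?W ?F) - 1) / 3\<rceil>)"
    using minimal[rule_format, of ?W ?F] \<open>graph ?W ?F\<close> calculation(1) by simp
  ultimately show ?thesis
    using assms(5,6) by (intro choosable_of_choice_number_bound \<open>graph ?W ?F\<close>) linarith+
qed

lemma color_in_at_most_two_lists_of_part:
  fixes L :: "'a \<Rightarrow> 'c set"
  assumes G: "complete_multipartite V E P" and X: "X \<in> P"
    and noncol: "\<not> (\<exists>f. L_coloring V E L f)"
    and lists: "\<forall>v\<in>V. finite (L v) \<and> card (L v) \<ge> Suc m"
    and remainder: "\<And>T. T \<subseteq> V \<Longrightarrow> card T = 3 \<Longrightarrow> choosable (V - T) (induced_edges (V - T) E) m"
  shows "card {v\<in>X. c \<in> L v} \<le> 2"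
proof (rule ccontr)
  assume "\<not> card {v\<in>X. c \<in> L v} \<le> 2"
  then have "3 \<le> card {v\<in>X. c \<in> L v}" by simp
  then obtain T where T: "T \<subseteq> {v\<in>X. c \<in> L v}" "card T = 3"
    by (meson obtain_subset_with_card_n)
  have part: "partition_on V P"
    and adj: "\<forall>u\<in>V. \<forall>v\<in>V. E u v \<longleftrightarrow> \<not> (\<exists>X\<in>P. u \<in> X \<and> v \<in> X)"
    using G unfolding complete_multipartite_def by blast+
  have "finite V" using G unfolding complete_multipartite_def graph_def by blast
  have "T \<subseteq> V" using T X partition_onD1[OF part] by blast
  moreover have "\<forall>u\<in>T. \<forall>w\<in>T. \<not> E u w" using T X adj \<open>T \<subseteq> V\<close> by blast
  moreover have "\<forall>v\<in>T. c \<in> L v" using T by blast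
  ultimately have "\<exists>f. L_coloring V E L f"
    using L_coloring_of_choosable_remainder[OF \<open>finite V\<close> _ _ remainder lists] T by blast
  then show False using noncol by blast
qed

lemma sum_card_eq_sum_card_holders:
  assumes "finite Y" "finite C" "\<forall>v\<in>Y. L v \<subseteq> C"
  shows "(\<Sum>v\<in>Y. card (L v)) = (\<Sum>c\<in>C. card {v\<in>Y. c \<in> L v})"
proof -
  have "(\<Sum>v\<in>Y. card (L v)) = (\<Sum>v\<in>Y. \<Sum>c\<in>C. if c \<in> L v then 1 else 0)"
    using assms by (intro sum.cong refl) (simp add: sum.If_cases Int_absorb1)
  also have "\<dots> = (\<Sum>c\<in>C. \<Sum>v\<in>Y. if c \<in> L v then 1 else 0)" by (rule sum.swap)
  also have "\<dots> = (\<Sum>c\<in>C. card {v\<in>Y. c \<in> L v})"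
    using assms(1) by (simp add: sum.If_cases Int_def)
  finally show ?thesis .
qed

lemma card_mult_le_by_double_counting:
  assumes "finite Y" "finite C"
    and lists: "\<forall>v\<in>Y. L v \<subseteq> C \<and> card (L v) \<ge> q"
    and holders: "\<forall>c\<in>C. card {v\<in>Y. c \<in> L v} \<le> b"
  shows "card Y * q \<le> b * card C"
proof -
  have "card Y * q = (\<Sum>v\<in>Y. q)" by simp
  also have "\<dots> \<le> (\<Sum>v\<in>Y. card (L v))" using lists by (intro sum_mono) blast
  also have "\<dots> = (\<Sum>c\<in>C. card {v\<in>Y. c \<in> L v})"
    using assms(1,2) lists by (intro sum_card_eq_sum_card_holders) auto
  also have "\<dots> \<le> (\<Sum>c\<in>C. b)" using holders by (intro sum_mono) blast
  finally show ?thesis by (simp add: mult.commute)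
qed

lemma card_mult_le_of_parts:
  assumes "finite V" and part: "partition_on V P" and bound: "\<forall>X\<in>P. card X * q \<le> b"
  shows "card V * q \<le> card P * b"
proof -
  have "card V = (\<Sum>X\<in>P. card X)"
    using partition_onD1[OF part] partition_onD2[OF part] \<open>finite V\<close>
    by (metis card_Union_disjoint finite_UnionD rev_finite_subset Union_upper)
  then have "card V * q = (\<Sum>X\<in>P. card X * q)" by (simp add: sum_distrib_right)
  also have "\<dots> \<le> (\<Sum>X\<in>P. b)" using bound by (intro sum_mono) blast
  finally show ?thesis by simp
qed

lemma le_four_of_double_counting_bounds:
  fixes n k q x :: nat
  assumes "0 < n" "0 < k"
    and total: "n * q \<le> k * (2 * (n - 1))" and part: "x * q \<le> 2 * (n - 1)"
    and lists: "n + k \<le> 3 * q + 1"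
  shows "x \<le> 4"
proof (rule ccontr)
  assume "\<not> x \<le> 4"
  then have "5 * q \<le> 2 * (n - 1)" using part mult_le_mono1[of 5 x q] by linarith
  moreover
  have "k * (2 * (n - 1)) < 2 * k * n" using \<open>0 < n\<close> \<open>0 < k\<close> by simp
  then have "q * n < 2 * k * n" using total by (metis mult.commute order_le_less_trans)
  then have "q < 2 * k" by simp
  ultimately show False using lists \<open>0 < n\<close> by linarith
qed

lemma independence_number_le_part_bound:
  assumes G: "complete_multipartite V E P" and bound: "\<forall>X\<in>P. card X \<le> m"
  shows "independence_number V E \<le> m"
proof -
  have fin: "finite V" using G unfolding complete_multipartite_def graph_def by blast
  have part: "partition_on V P"
    and adj: "\<forall>u\<in>V. \<forall>v\<in>V. E u v \<longleftrightarrow> \<not> (\<exists>X\<in>P. u \<in> X \<and> v \<in> X)"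
    using G unfolding complete_multipartite_def by blast+
  have "card S \<le> m" if S: "independent_set V E S" for S
  proof (cases "S = {}")
    case False
    then obtain u where u: "u \<in> S" by blast
    then obtain X where X: "X \<in> P" "u \<in> X"
      using S part unfolding independent_set_def partition_on_def by blast
    have "S \<subseteq> X"
    proof
      fix w assume "w \<in> S"
      then have "u \<in> V" "w \<in> V" "\<not> E u w" using S u unfolding independent_set_def by auto
      then obtain Y where "Y \<in> P" "u \<in> Y" "w \<in> Y" using adj by blast
      then show "w \<in> X" using X disjointD[OF partition_onD2[OF part]] by blast
    qed
    moreover have "finite X" using X fin partition_onD1[OF part] by (blast intro: finite_subset)
    ultimately have "card S \<le> card X" by (rule card_mono[rotated])
    then show ?thesis using bound X by auto
  qed simp
  moreover have "finite {S. independent_set V E S}"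
    by (rule finite_subset[of _ "Pow V"]) (use fin in \<open>auto simp: independent_set_def\<close>)
  moreover have "independent_set V E {}" unfolding independent_set_def by simp
  ultimately show ?thesis unfolding independence_number_def by (intro Max.boundedI) auto
qed

theorem lemma13:
  fixes V :: "'a set" and E :: "'a \<Rightarrow> 'a \<Rightarrow> bool" and P :: "'a set set"
    and L :: "'a \<Rightarrow> 'c set" and k n :: nat
  assumes k: "k \<ge> 1"
    and n: "n \<ge> 2 * k + 2"
    and G: "complete_multipartite V E P"
    and parts: "card P = k"
    and nV: "card V = n"
    and lists: "\<forall>v\<in>V. finite (L v) \<and> int (card (L v)) \<ge> \<lceil>(real n + real k - 1) / 3\<rceil>"
    and noncol: "\<not> (\<exists>f. L_coloring V E L f)"
    and union: "card (\<Union>v\<in>V. L v) \<le> n - 1"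
    and minimal: "\<forall>(V' :: 'a set) E'. graph V' E' \<and> card V' < n \<longrightarrow>
        choice_number V' E' \<le> max (chromatic_number V' E')
          (nat \<lceil>(real (card V') + real (chromatic_number V' E') - 1) / 3\<rceil>)"
  shows "independence_number V E \<le> 4 \<and> (\<forall>X\<in>P. card X \<le> 4)"
proof -
  have "finite V" and part: "partition_on V P"
    using G unfolding complete_multipartite_def graph_def by blast+
  define q where "q = nat \<lceil>(real n + real k - 1) / 3\<rceil>"
  have "(real n + real k - 1) / 3 \<le> real q" unfolding q_def by (rule real_nat_ceiling_ge)
  then have "real (n + k) \<le> real (3 * q + 1)" by simp
  then have q3: "n + k \<le> 3 * q + 1" by (simp only: of_nat_le_iff)
  then obtain m where q: "q = Suc m" and "k \<le> m" using n by (cases q) auto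
  have lists_q: "\<forall>v\<in>V. finite (L v) \<and> card (L v) \<ge> Suc m"
    using lists unfolding q[symmetric] q_def by (simp add: nat_le_iff)
  have "choosable (V - T) (induced_edges (V - T) E) m" if "T \<subseteq> V" "card T = 3" for T
    using choosable_after_removing_three[OF G that] minimal nV parts q3 q n \<open>k \<le> m\<close> by simp
  then have holders: "\<forall>X\<in>P. \<forall>c\<in>\<Union>v\<in>V. L v. card {v\<in>X. c \<in> L v} \<le> 2"
    using color_in_at_most_two_lists_of_part[OF G _ noncol lists_q] by blast
  have part_bound: "\<forall>X\<in>P. card X * q \<le> 2 * (n - 1)"
  proof
    fix X assume "X \<in> P"
    then have "X \<subseteq> V" using partition_onD1[OF part] by blast
    have "card X * q \<le> 2 * card (\<Union>v\<in>V. L v)"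
    proof (rule card_mult_le_by_double_counting)
      show "finite X" using \<open>X \<subseteq> V\<close> \<open>finite V\<close> by (rule finite_subset)
      show "finite (\<Union>v\<in>V. L v)" using \<open>finite V\<close> lists_q by blast
      show "\<forall>v\<in>X. L v \<subseteq> (\<Union>v\<in>V. L v) \<and> q \<le> card (L v)" using \<open>X \<subseteq> V\<close> lists_q q by blast
    qed (use holders \<open>X \<in> P\<close> in blast)
    then show "card X * q \<le> 2 * (n - 1)" using union by linarith
  qed
  then have "n * q \<le> k * (2 * (n - 1))"
    using card_mult_le_of_parts[OF \<open>finite V\<close> part] nV parts by simp
  then have "\<forall>X\<in>P. card X \<le> 4"
    using le_four_of_double_counting_bounds[OF _ _ _ _ q3] part_bound k n by auto
  then show ?thesis using independence_number_le_part_bound[OF G] by blast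
qed

end
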